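(* Let $G=(V,E)$ be a twinless strongly connected directed graph, and let $G^{1}=(V,E^{1})$ with $E^{1}\subseteq E$ be a strongly connected spanning subgraph of $G$ that is not twinless strongly connected. Let $(v,w)\in E\setminus E^{1}$ be an edge such that $v$ and $w$ lie in different twinless strongly connected components of $G^{1}$. If $G^{1}$ has $k$ twinless strongly connected components, then the graph $(V,E^{1}\cup\{(v,w)\})$ has fewer than $k$ twinless strongly connected components.
   Context: Directed graphs are finite. Vertices $a,b$ of a directed graph are twinless strongly connected if there exist a directed path $p$ from $a$ to $b$ and a directed path $q$ from $b$ to $a$ such that for every edge $(x,y)$ of $p$, the reverse edge $(y,x)$ does not belong to $q$. This is an equivalence relation on the vertices; its equivalence classes are the twinless strongly connected components. A directed graph is twinless strongly connected if it has exactly one twinless strongly connected component (equivalently, it has a strongly connected spanning subgraph containing no pair of antiparallel edges $(x,y),(y,x)$). *)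

theory Defs
  imports Main
begin

definition is_path :: "('a \<times> 'a) set \<Rightarrow> 'a list \<Rightarrow> 'a \<Rightarrow> 'a \<Rightarrow> bool" where
  "is_path E p a b \<longleftrightarrow> p \<noteq> [] \<and> hd p = a \<and> last p = b \<and> set (zip p (tl p)) \<subseteq> E"

definition path_edges :: "'a list \<Rightarrow> ('a \<times> 'a) set" where
  "path_edges p = set (zip p (tl p))"

definition twinless_sc :: "('a \<times> 'a) set \<Rightarrow> 'a \<Rightarrow> 'a \<Rightarrow> bool" where
  "twinless_sc E a b \<longleftrightarrow>
     (\<exists>p q. is_path E p a b \<and> is_path E q b a \<and>
            (\<forall>(x, y) \<in> path_edges p. (y, x) \<notin> path_edges q))"

definition tsc_rel :: "'a set \<Rightarrow> ('a \<times> 'a) set \<Rightarrow> ('a \<times> 'a) set" where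
  "tsc_rel V E = {(a, b). a \<in> V \<and> b \<in> V \<and> twinless_sc E a b}"

definition num_tscc :: "'a set \<Rightarrow> ('a \<times> 'a) set \<Rightarrow> nat" where
  "num_tscc V E = card (V // tsc_rel V E)"

definition twinless_strongly_connected :: "'a set \<Rightarrow> ('a \<times> 'a) set \<Rightarrow> bool" where
  "twinless_strongly_connected V E \<longleftrightarrow> num_tscc V E = 1"

definition strongly_connected :: "'a set \<Rightarrow> ('a \<times> 'a) set \<Rightarrow> bool" where
  "strongly_connected V E \<longleftrightarrow> (\<forall>a\<in>V. \<forall>b\<in>V. (a, b) \<in> E\<^sup>*)"

end

theory Submission
  imports Defs "HOL-Library.Transitive_Closure_Table"
begin

text \<open>Vertices a and b are twinless strongly connected iff some subgraph F without antiparallel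
  edges contains walks from a to b and back. Two such witnesses for a, b and for b, c glue into one
  for a, c: keep the first on the strong component S of a and the second on all edges not inside S;
  a pair of antiparallel edges then lies entirely in one of the two witnesses.

  Adding (v, w) to E1 can only coarsen the relation, and it joins v and w: a simple path from w to v
  in E1 closes up with (v, w) to a cycle without antiparallel edges, since (w, v) \<notin> E1 (otherwise
  the same argument would make v and w twinless strongly connected in E1 already). So the induced
  map between the two partitions is surjective but not injective.\<close>

definition twin_free :: "('a \<times> 'a) set \<Rightarrow> bool" where
  "twin_free F \<longleftrightarrow> (\<forall>(x, y) \<in> F. (y, x) \<notin> F)"

lemma is_path_iff_rtrancl_path:
  "is_path E p a b \<longleftrightarrow> (\<exists>xs. p = a # xs \<and> rtrancl_path (\<lambda>x y. (x, y) \<in> E) a xs b)"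
proof -
  have "is_path E (a # xs) a b \<longleftrightarrow> rtrancl_path (\<lambda>x y. (x, y) \<in> E) a xs b" for xs
  proof (induction xs arbitrary: a)
    case Nil
    show ?case by (auto simp: is_path_def elim: rtrancl_path.cases intro: rtrancl_path.base)
  next
    case (Cons x xs)
    have "is_path E (a # x # xs) a b \<longleftrightarrow> (a, x) \<in> E \<and> is_path E (x # xs) x b"
      by (auto simp: is_path_def)
    then show ?case using Cons.IH by (auto elim: rtrancl_path.cases intro: rtrancl_path.step)
  qed
  moreover have "is_path E p a b \<Longrightarrow> p = a # tl p"
    by (cases p) (auto simp: is_path_def)
  ultimately show ?thesis by metis
qed

lemma rtrancl_iff_rtrancl_path:
  "(a, b) \<in> E\<^sup>* \<longleftrightarrow> (\<exists>xs. rtrancl_path (\<lambda>x y. (x, y) \<in> E) a xs b)"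
  by (simp add: rtranclp_eq_rtrancl_path[symmetric] rtranclp_rtrancl_eq)

lemma is_path_rtrancl: "is_path E p a b \<Longrightarrow> (a, b) \<in> E\<^sup>*"
  by (auto simp: is_path_iff_rtrancl_path rtrancl_iff_rtrancl_path)

lemma rtrancl_obtain_distinct_path:
  assumes "(a, b) \<in> E\<^sup>*"
  obtains p where "is_path E p a b" "distinct p"
proof -
  obtain xs where "rtrancl_path (\<lambda>x y. (x, y) \<in> E) a xs b"
    using assms by (auto simp: rtrancl_iff_rtrancl_path)
  then obtain ys where "rtrancl_path (\<lambda>x y. (x, y) \<in> E) a ys b" "distinct (a # ys)"
    by (rule rtrancl_path_distinct)
  then show thesis using that[of "a # ys"] by (simp add: is_path_iff_rtrancl_path)
qed

lemma is_path_path_edges_subset: "is_path E p a b \<Longrightarrow> path_edges p \<subseteq> E"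
  by (simp add: is_path_def path_edges_def)

lemma is_path_mono: "is_path E p a b \<Longrightarrow> path_edges p \<subseteq> F \<Longrightarrow> is_path F p a b"
  by (simp add: is_path_def path_edges_def)

lemma twin_free_path_edges: "distinct p \<Longrightarrow> twin_free (path_edges p)"
proof (induction p rule: induct_list012)
  case (3 x y zs)
  have "(x, y) \<notin> path_edges (y # zs)" "(y, x) \<notin> path_edges (y # zs)"
    using "3.prems" by (auto simp: path_edges_def dest: set_zip_leftD set_zip_rightD)
  then show ?case using 3 by (auto simp: twin_free_def path_edges_def)
qed (simp_all add: twin_free_def path_edges_def)

lemma twin_free_Un:
  "twin_free A \<Longrightarrow> twin_free B \<Longrightarrow> \<forall>(x, y) \<in> A. (y, x) \<notin> B \<Longrightarrow> twin_free (A \<union> B)"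
  unfolding twin_free_def by blast

lemma twinless_sc_iff_twin_free_subgraph:
  "twinless_sc E a b \<longleftrightarrow> (\<exists>F \<subseteq> E. twin_free F \<and> (a, b) \<in> F\<^sup>* \<and> (b, a) \<in> F\<^sup>*)"
proof
  assume "twinless_sc E a b"
  then obtain p q where p: "is_path E p a b" and q: "is_path E q b a"
    and no_twins: "\<forall>(x, y) \<in> path_edges p. (y, x) \<notin> path_edges q"
    unfolding twinless_sc_def by blast
  obtain p' where p': "is_path (path_edges p) p' a b" "distinct p'"
    using is_path_rtrancl[OF is_path_mono[OF p order_refl]] by (rule rtrancl_obtain_distinct_path)
  obtain q' where q': "is_path (path_edges q) q' b a" "distinct q'"
    using is_path_rtrancl[OF is_path_mono[OF q order_refl]] by (rule rtrancl_obtain_distinct_path)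
  define F where "F = path_edges p' \<union> path_edges q'"
  have sub: "path_edges p' \<subseteq> path_edges p" "path_edges q' \<subseteq> path_edges q"
    using p'(1) q'(1) by (simp_all add: is_path_path_edges_subset)
  have "(y, x) \<notin> path_edges q'" if "(x, y) \<in> path_edges p'" for x y
  proof -
    have "(x, y) \<in> path_edges p" using that sub(1) by blast
    then have "(y, x) \<notin> path_edges q" using no_twins by fast
    then show ?thesis using sub(2) by blast
  qed
  then have "twin_free F"
    unfolding F_def using p'(2) q'(2) by (intro twin_free_Un twin_free_path_edges) auto
  moreover have "F \<subseteq> E"
    using sub is_path_path_edges_subset[OF p] is_path_path_edges_subset[OF q]
    unfolding F_def by blast
  moreover have "(a, b) \<in> F\<^sup>*" "(b, a) \<in> F\<^sup>*"
    using is_path_rtrancl[OF is_path_mono[OF p'(1)]] is_path_rtrancl[OF is_path_mono[OF q'(1)]]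
    by (simp_all add: F_def)
  ultimately show "\<exists>F \<subseteq> E. twin_free F \<and> (a, b) \<in> F\<^sup>* \<and> (b, a) \<in> F\<^sup>*" by blast
next
  assume "\<exists>F \<subseteq> E. twin_free F \<and> (a, b) \<in> F\<^sup>* \<and> (b, a) \<in> F\<^sup>*"
  then obtain F where F: "F \<subseteq> E" "twin_free F" "(a, b) \<in> F\<^sup>*" "(b, a) \<in> F\<^sup>*" by blast
  obtain p q where p: "is_path F p a b" and q: "is_path F q b a"
    using F(3,4) rtrancl_obtain_distinct_path by metis
  have p_F: "path_edges p \<subseteq> F" and q_F: "path_edges q \<subseteq> F"
    using p q by (simp_all add: is_path_path_edges_subset)
  have "is_path E p a b" "is_path E q b a"
    using is_path_mono[OF p] is_path_mono[OF q] p_F q_F F(1) by simp_all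
  moreover have "\<forall>(x, y) \<in> path_edges p. (y, x) \<notin> path_edges q"
    using p_F q_F F(2) unfolding twin_free_def by blast
  ultimately show "twinless_sc E a b" unfolding twinless_sc_def by blast
qed

lemma twinless_sc_refl: "twinless_sc E a a"
  unfolding twinless_sc_iff_twin_free_subgraph by (rule exI[of _ "{}"]) (simp add: twin_free_def)

lemma twinless_sc_sym: "twinless_sc E a b \<Longrightarrow> twinless_sc E b a"
  unfolding twinless_sc_iff_twin_free_subgraph by blast

lemma twinless_sc_mono: "twinless_sc E a b \<Longrightarrow> E \<subseteq> E' \<Longrightarrow> twinless_sc E' a b"
  unfolding twinless_sc_iff_twin_free_subgraph by blast

lemma rtrancl_restrict_scc:
  fixes F :: "('a \<times> 'a) set" and a :: 'a
  defines "S \<equiv> {z. (a, z) \<in> F\<^sup>* \<and> (z, a) \<in> F\<^sup>*}"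
  assumes "(x, y) \<in> F\<^sup>*" "x \<in> S" "y \<in> S"
  shows "(x, y) \<in> (Restr F S)\<^sup>*"
  using assms(2,4)
proof (induction rule: rtrancl_induct)
  case base
  show ?case by simp
next
  case (step z y)
  have "(a, z) \<in> F\<^sup>*" using assms(3) step.hyps(1) unfolding S_def by (blast intro: rtrancl_trans)
  moreover have "(z, a) \<in> F\<^sup>*"
    using step.hyps(2) step.prems unfolding S_def by (blast intro: converse_rtrancl_into_rtrancl)
  ultimately have "z \<in> S" unfolding S_def by blast
  then show ?case using step by (blast intro: rtrancl_into_rtrancl)
qed

lemma rtrancl_enters_set:
  assumes "(x, y) \<in> F\<^sup>*" "y \<in> S"
  shows "\<exists>u \<in> S. (x, u) \<in> (F - S \<times> S)\<^sup>*"
  using assms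
proof (induction rule: converse_rtrancl_induct)
  case base
  then show ?case by blast
next
  case (step x z)
  show ?case
  proof (cases "x \<in> S")
    case False
    then have "(x, z) \<in> F - S \<times> S" using step.hyps(1) by blast
    then show ?thesis using step.IH step.prems by (meson converse_rtrancl_into_rtrancl)
  qed (use rtrancl.rtrancl_refl in blast)
qed

lemma rtrancl_leaves_set:
  assumes "(y, x) \<in> F\<^sup>*" "y \<in> S"
  shows "\<exists>u \<in> S. (u, x) \<in> (F - S \<times> S)\<^sup>*"
proof -
  have "(x, y) \<in> (F\<inverse>)\<^sup>*" using assms(1) by (simp add: rtrancl_converse)
  then obtain u where "u \<in> S" "(x, u) \<in> (F\<inverse> - S \<times> S)\<^sup>*"
    using rtrancl_enters_set[of x y "F\<inverse>" S] assms(2) by blast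
  moreover have "F\<inverse> - S \<times> S = (F - S \<times> S)\<inverse>" by auto
  ultimately show ?thesis by (auto simp: rtrancl_converse)
qed

lemma twin_free_glue:
  "twin_free F1 \<Longrightarrow> twin_free F2 \<Longrightarrow> twin_free (Restr F1 S \<union> (F2 - S \<times> S))"
  unfolding twin_free_def by blast

lemma twinless_sc_trans:
  assumes "twinless_sc E a b" "twinless_sc E b c"
  shows "twinless_sc E a c"
proof -
  obtain F1 where F1: "F1 \<subseteq> E" "twin_free F1" "(a, b) \<in> F1\<^sup>*" "(b, a) \<in> F1\<^sup>*"
    using assms(1) unfolding twinless_sc_iff_twin_free_subgraph by blast
  obtain F2 where F2: "F2 \<subseteq> E" "twin_free F2" "(b, c) \<in> F2\<^sup>*" "(c, b) \<in> F2\<^sup>*"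
    using assms(2) unfolding twinless_sc_iff_twin_free_subgraph by blast
  define S where "S = {z. (a, z) \<in> F1\<^sup>* \<and> (z, a) \<in> F1\<^sup>*}"
  define F where "F = Restr F1 S \<union> (F2 - S \<times> S)"
  have F1_F: "(Restr F1 S)\<^sup>* \<subseteq> F\<^sup>*" and F2_F: "(F2 - S \<times> S)\<^sup>* \<subseteq> F\<^sup>*"
    unfolding F_def by (simp_all add: rtrancl_mono)
  have S_F: "(a, z) \<in> F\<^sup>* \<and> (z, a) \<in> F\<^sup>*" if "z \<in> S" for z
  proof -
    have "a \<in> S" by (simp add: S_def)
    then show ?thesis
      using that rtrancl_restrict_scc[where F = F1 and a = a] F1_F unfolding S_def by blast
  qed
  have "b \<in> S" using F1 by (simp add: S_def)
  obtain u where "u \<in> S" "(c, u) \<in> (F2 - S \<times> S)\<^sup>*"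
    using rtrancl_enters_set[OF F2(4) \<open>b \<in> S\<close>] by blast
  then have "(c, a) \<in> F\<^sup>*" using S_F F2_F by (blast intro: rtrancl_trans)
  obtain u' where "u' \<in> S" "(u', c) \<in> (F2 - S \<times> S)\<^sup>*"
    using rtrancl_leaves_set[OF F2(3) \<open>b \<in> S\<close>] by blast
  then have "(a, c) \<in> F\<^sup>*" using S_F F2_F by (blast intro: rtrancl_trans)
  moreover have "F \<subseteq> E" using F1(1) F2(1) unfolding F_def by blast
  moreover have "twin_free F" unfolding F_def using F1(2) F2(2) by (rule twin_free_glue)
  ultimately show ?thesis
    unfolding twinless_sc_iff_twin_free_subgraph using \<open>(c, a) \<in> F\<^sup>*\<close> by blast
qed

lemma equiv_tsc_rel: "equiv V (tsc_rel V E)"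
  unfolding equiv_def refl_on_def sym_def trans_def tsc_rel_def
  by (auto intro: twinless_sc_refl twinless_sc_sym twinless_sc_trans)

lemma tsc_rel_mono: "E \<subseteq> E' \<Longrightarrow> tsc_rel V E \<subseteq> tsc_rel V E'"
  unfolding tsc_rel_def by (auto intro: twinless_sc_mono)

lemma twinless_sc_edge_reverse_reachable:
  assumes "(x, y) \<in> E" "(y, x) \<notin> E" "(y, x) \<in> E\<^sup>*"
  shows "twinless_sc E x y"
proof -
  obtain q where q: "is_path E q y x" "distinct q"
    using assms(3) by (rule rtrancl_obtain_distinct_path)
  define F where "F = insert (x, y) (path_edges q)"
  have q_E: "path_edges q \<subseteq> E" using q(1) by (rule is_path_path_edges_subset)
  have "F \<subseteq> E" using assms(1) q_E unfolding F_def by blast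
  moreover have "twin_free F"
  proof -
    have "x \<noteq> y" using assms(1,2) by blast
    then have "twin_free {(x, y)}" by (simp add: twin_free_def)
    moreover have "(y, x) \<notin> path_edges q" using q_E assms(2) by blast
    ultimately have "twin_free ({(x, y)} \<union> path_edges q)"
      by (intro twin_free_Un twin_free_path_edges q(2)) auto
    then show ?thesis by (simp add: F_def)
  qed
  moreover have "(x, y) \<in> F\<^sup>*" unfolding F_def by (simp add: r_into_rtrancl)
  moreover have "(y, x) \<in> F\<^sup>*"
    using is_path_rtrancl[OF is_path_mono[OF q(1)]] unfolding F_def by (simp add: subset_insertI)
  ultimately show ?thesis unfolding twinless_sc_iff_twin_free_subgraph by blast
qed

lemma card_quotient_less_if_coarser:
  assumes "finite A" "equiv A R" "equiv A R'" "R \<subseteq> R'" "(a, b) \<in> R' - R"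
  shows "card (A // R') < card (A // R)"
proof -
  define f where "f X = R' `` X" for X
  have f_class: "f (R `` {x}) = R' `` {x}" if "x \<in> A" for x
  proof (intro equalityI subsetI)
    fix y assume "y \<in> f (R `` {x})"
    then obtain z where "(x, z) \<in> R'" "(z, y) \<in> R'" using assms(4) unfolding f_def by blast
    then show "y \<in> R' `` {x}" using assms(3) unfolding equiv_def by (blast dest: transD)
  next
    fix y assume "y \<in> R' `` {x}"
    moreover have "x \<in> R `` {x}" using assms(2) that by (rule equiv_class_self)
    ultimately show "y \<in> f (R `` {x})" unfolding f_def by blast
  qed
  have ab: "a \<in> A" "b \<in> A" using assms(3,5) equiv_type by blast+
  have quotient_image: "A // R' = f ` (A // R)"
    unfolding quotient_def using f_class by auto
  have "\<not> inj_on f (A // R)"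
  proof
    assume inj: "inj_on f (A // R)"
    have "f (R `` {a}) = f (R `` {b})"
      using f_class ab assms(3,5) by (simp add: equiv_class_eq_iff)
    then have "R `` {a} = R `` {b}"
      using inj ab by (auto intro: quotientI dest: inj_onD)
    then show False using assms(2,5) ab by (simp add: equiv_class_eq_iff)
  qed
  moreover have fin: "finite (A // R)"
    using assms(1,2) equiv_type by (blast intro: finite_quotient)
  ultimately have "card (f ` (A // R)) \<noteq> card (A // R)"
    by (simp add: inj_on_iff_eq_card)
  moreover have "card (f ` (A // R)) \<le> card (A // R)"
    using fin by (rule card_image_le)
  ultimately show ?thesis by (simp add: quotient_image)
qed

theorem mainTheorem2:
  fixes V :: "'a set" and E E1 :: "('a \<times> 'a) set" and v w :: 'a and k :: nat
  assumes "finite V" and "E \<subseteq> V \<times> V"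
    and "twinless_strongly_connected V E"
    and "E1 \<subseteq> E"
    and "strongly_connected V E1"
    and "\<not> twinless_strongly_connected V E1"
    and "(v, w) \<in> E - E1"
    and "\<not> twinless_sc E1 v w"
    and "num_tscc V E1 = k"
  shows "num_tscc V (insert (v, w) E1) < k"
proof -
  let ?E' = "insert (v, w) E1"
  have vw_V: "v \<in> V" "w \<in> V" using assms(2,7) by auto
  then have vw_E1: "(v, w) \<in> E1\<^sup>*" "(w, v) \<in> E1\<^sup>*"
    using assms(5) unfolding strongly_connected_def by blast+
  have "v \<noteq> w" using assms(8) twinless_sc_refl[of E1 v] by auto
  have "(w, v) \<notin> E1"
  proof
    assume "(w, v) \<in> E1"
    moreover have "(v, w) \<notin> E1" using assms(7) by blast
    ultimately have "twinless_sc E1 w v"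
      using vw_E1(1) by (rule twinless_sc_edge_reverse_reachable)
    then show False using assms(8) by (blast dest: twinless_sc_sym)
  qed
  then have "(w, v) \<notin> ?E'" using \<open>v \<noteq> w\<close> by simp
  moreover have "(w, v) \<in> ?E'\<^sup>*"
    using vw_E1(2) rtrancl_mono[of E1 ?E'] by blast
  ultimately have "twinless_sc ?E' v w"
    by (intro twinless_sc_edge_reverse_reachable) simp_all
  then have "(v, w) \<in> tsc_rel V ?E' - tsc_rel V E1"
    using vw_V assms(8) by (simp add: tsc_rel_def)
  with tsc_rel_mono[OF subset_insertI]
  have "card (V // tsc_rel V ?E') < card (V // tsc_rel V E1)"
    by (rule card_quotient_less_if_coarser[OF assms(1) equiv_tsc_rel equiv_tsc_rel])
  then show ?thesis using assms(9) by (simp add: num_tscc_def)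
qed

end
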